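(* The Galois structure $\Gamma_C=(\mathsf{PreOrdGrp},\mathsf{PreOrdAb},C,V,\mathscr{E}_C,\mathscr{Z}_C)$ is admissible; that is, for every preordered group $B$, every preordered abelian group $X$ and every regular epimorphism $\phi\colon X\to C(B)$ in $\mathsf{PreOrdAb}$, the functor $C$ sends the pullback in $\mathsf{PreOrdGrp}$ of $V(\phi)$ along the unit $\eta_B\colon B\to VC(B)$ to a pullback in $\mathsf{PreOrdAb}$.
   Context: A preordered group is a pair $(G,P_G)$ where $G$ is a group (additively written) and $P_G\subseteq G$ a submonoid closed under conjugation; morphisms are group homomorphisms $f$ with $f(P_G)\subseteq P_H$. This is $\mathsf{PreOrdGrp}$; $\mathsf{PreOrdAb}$ is the full subcategory with $G$ abelian, $V$ the inclusion. $C$ is the left adjoint of $V$: $C(G,P_G)=(G/[G,G],\eta_G(P_G))$ with $\eta_G$ the abelianization quotient, unit $(\eta_G,\eta_G|_{P_G})$; the counit is an isomorphism. Limits in $\mathsf{PreOrdGrp}$ are computed componentwise. $\mathscr{E}_C$ (resp. $\mathscr{Z}_C$) is the class of regular epimorphisms of $\mathsf{PreOrdGrp}$ (resp. $\mathsf{PreOrdAb}$), namely morphisms $(f,\bar f)$ with both $f$ and $\bar f$ surjective. In general, a Galois structure $(\mathscr C,\mathscr F,F,U,\mathscr E,\mathscr Z)$ (adjunction $F\dashv U$ with classes of morphisms $\mathscr E$, $\mathscr Z$ stable under pullback and composition, containing isomorphisms, with $F(\mathscr E)\subseteq\mathscr Z$, $U(\mathscr Z)\subseteq\mathscr E$) is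 admissible when, for each $B$, the counit of the induced adjunction between extensions of $B$ in $\mathscr E$ and extensions of $F(B)$ in $\mathscr Z$ (left adjoint $F$, right adjoint pulling back $U(\phi)$ along the unit $\eta_B$) is an isomorphism; when the counit of $F\dashv U$ is an isomorphism, this is equivalent to the pullback-preservation condition stated in the claim. *)

theory Defs
  imports "HOL-Algebra.Algebra"
begin

definition preord_group :: "('a, 'm) monoid_scheme \<Rightarrow> 'a set \<Rightarrow> bool" where
  "preord_group G P \<longleftrightarrow> group G \<and> P \<subseteq> carrier G \<and> \<one>\<^bsub>G\<^esub> \<in> P
     \<and> (\<forall>x\<in>P. \<forall>y\<in>P. x \<otimes>\<^bsub>G\<^esub> y \<in> P)
     \<and> (\<forall>g\<in>carrier G. \<forall>x\<in>P. g \<otimes>\<^bsub>G\<^esub> x \<otimes>\<^bsub>G\<^esub> inv\<^bsub>G\<^esub> g \<in> P)"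

definition preord_ab :: "('a, 'm) monoid_scheme \<Rightarrow> 'a set \<Rightarrow> bool" where
  "preord_ab G P \<longleftrightarrow> preord_group G P \<and> comm_group G"

definition preord_hom :: "('a, 'm) monoid_scheme \<Rightarrow> 'a set \<Rightarrow> ('b, 'n) monoid_scheme \<Rightarrow> 'b set
    \<Rightarrow> ('a \<Rightarrow> 'b) \<Rightarrow> bool" where
  "preord_hom G P H Q f \<longleftrightarrow> f \<in> hom G H \<and> f ` P \<subseteq> Q"

definition preord_regepi :: "('a, 'm) monoid_scheme \<Rightarrow> 'a set \<Rightarrow> ('b, 'n) monoid_scheme \<Rightarrow> 'b set
    \<Rightarrow> ('a \<Rightarrow> 'b) \<Rightarrow> bool" where
  "preord_regepi G P H Q f \<longleftrightarrow> preord_hom G P H Q f \<and> f ` carrier G = carrier H \<and> f ` P = Q"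

definition abel :: "('a, 'm) monoid_scheme \<Rightarrow> 'a set monoid" where
  "abel G = G Mod (derived G (carrier G))"

definition eta :: "('a, 'm) monoid_scheme \<Rightarrow> 'a \<Rightarrow> 'a set" where
  "eta G x = derived G (carrier G) #>\<^bsub>G\<^esub> x"

definition abel_cone :: "('a, 'm) monoid_scheme \<Rightarrow> 'a set \<Rightarrow> 'a set set" where
  "abel_cone G P = eta G ` P"

definition abel_map :: "('a, 'm) monoid_scheme \<Rightarrow> ('b, 'n) monoid_scheme \<Rightarrow> ('a \<Rightarrow> 'b)
    \<Rightarrow> 'a set \<Rightarrow> 'b set" where
  "abel_map G H f K = eta H (f (SOME x. x \<in> K))"

definition pb_group :: "('a, 'm) monoid_scheme \<Rightarrow> ('b, 'n) monoid_scheme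
    \<Rightarrow> ('a \<Rightarrow> 'c) \<Rightarrow> ('b \<Rightarrow> 'c) \<Rightarrow> ('a \<times> 'b) monoid" where
  "pb_group A B f g =
     \<lparr> carrier = {(a, b). a \<in> carrier A \<and> b \<in> carrier B \<and> f a = g b},
       monoid.mult = (\<lambda>x y. (fst x \<otimes>\<^bsub>A\<^esub> fst y, snd x \<otimes>\<^bsub>B\<^esub> snd y)),
       one = (\<one>\<^bsub>A\<^esub>, \<one>\<^bsub>B\<^esub>) \<rparr>"

definition pb_cone :: "('a, 'm) monoid_scheme \<Rightarrow> 'a set \<Rightarrow> ('b, 'n) monoid_scheme \<Rightarrow> 'b set
    \<Rightarrow> ('a \<Rightarrow> 'c) \<Rightarrow> ('b \<Rightarrow> 'c) \<Rightarrow> ('a \<times> 'b) set" where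
  "pb_cone A PA B PB f g = {(a, b). a \<in> PA \<and> b \<in> PB} \<inter> carrier (pb_group A B f g)"

text \<open>A commutative square of preordered groups
     D --p--> A
     |q       |f
     B --g--> C
  is a pullback (limits being computed componentwise) iff the comparison map
  d \<mapsto> (p d, q d) into the componentwise pullback is an isomorphism of preordered groups.\<close>
definition is_pullback_square ::
  "('d, 'k) monoid_scheme \<Rightarrow> 'd set \<Rightarrow> ('a, 'm) monoid_scheme \<Rightarrow> 'a set
   \<Rightarrow> ('b, 'n) monoid_scheme \<Rightarrow> 'b set \<Rightarrow> ('c, 'l) monoid_scheme
   \<Rightarrow> ('d \<Rightarrow> 'a) \<Rightarrow> ('d \<Rightarrow> 'b) \<Rightarrow> ('a \<Rightarrow> 'c) \<Rightarrow> ('b \<Rightarrow> 'c) \<Rightarrow> bool" where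
  "is_pullback_square D PD A PA B PB Cg p q f g \<longleftrightarrow>
     (\<forall>d\<in>carrier D. f (p d) = g (q d))
     \<and> (\<lambda>d. (p d, q d)) \<in> hom D (pb_group A B f g)
     \<and> bij_betw (\<lambda>d. (p d, q d)) (carrier D) (carrier (pb_group A B f g))
     \<and> (\<lambda>d. (p d, q d)) ` PD = pb_cone A PA B PB f g"

end

theory Submission imports Defs begin

text \<open>Let D be the pullback of \<open>\<eta>\<^sub>B\<close> and \<open>\<phi>\<close>. Since Y and C(B) are abelian, their units are
  bijective, so the comparison map from C(D) sends the class of (b, y) to ([b], y), and the
  target pullback consists of exactly these pairs with \<open>\<eta>\<^sub>B b = \<phi> y\<close>; this gives surjectivity,
  also on the cones. For injectivity, the first projection D \<rightarrow> B is surjective because \<open>\<phi>\<close> is,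
  hence [D, D] = [B, B] \<times> 1 as Y is abelian, and two elements of D with the same image differ
  by an element of [D, D].\<close>

lemma carrier_pb_group [simp]:
  "carrier (pb_group A B f g) = {(a, b). a \<in> carrier A \<and> b \<in> carrier B \<and> f a = g b}"
  by (simp add: pb_group_def)

lemma mult_pb_group [simp]:
  "x \<otimes>\<^bsub>pb_group A B f g\<^esub> y = (fst x \<otimes>\<^bsub>A\<^esub> fst y, snd x \<otimes>\<^bsub>B\<^esub> snd y)"
  by (simp add: pb_group_def)

lemma one_pb_group [simp]: "\<one>\<^bsub>pb_group A B f g\<^esub> = (\<one>\<^bsub>A\<^esub>, \<one>\<^bsub>B\<^esub>)"
  by (simp add: pb_group_def)

lemma group_pb_group:
  assumes f: "group_hom A C f" and g: "group_hom B C g"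
  shows "group (pb_group A B f g)"
proof -
  interpret f: group_hom A C f by (fact f)
  interpret g: group_hom B C g by (fact g)
  show ?thesis
  proof (rule groupI)
    show "\<exists>y\<in>carrier (pb_group A B f g). y \<otimes>\<^bsub>pb_group A B f g\<^esub> x = \<one>\<^bsub>pb_group A B f g\<^esub>"
      if "x \<in> carrier (pb_group A B f g)" for x
      using that by (intro bexI[of _ "(inv\<^bsub>A\<^esub> fst x, inv\<^bsub>B\<^esub> snd x)"])
        (auto simp: f.hom_inv g.hom_inv)
  qed (auto simp: f.G.m_assoc g.G.m_assoc)
qed

lemma hom_fst_pb_group: "fst \<in> hom (pb_group A B f g) A"
  and hom_snd_pb_group: "snd \<in> hom (pb_group A B f g) B"
  by (auto simp: hom_def)

lemma hom_pair_pb_group: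
  assumes "p \<in> hom G A" "q \<in> hom G B" "\<And>x. x \<in> carrier G \<Longrightarrow> f (p x) = g (q x)"
  shows "(\<lambda>x. (p x, q x)) \<in> hom G (pb_group A B f g)"
  using assms by (auto simp: hom_def)

lemma fst_image_pb_group:
  assumes "f ` carrier A \<subseteq> g ` carrier B"
  shows "fst ` carrier (pb_group A B f g) = carrier A"
  using assms by (force simp: image_iff)

lemma pb_cone_carrier: "pb_cone A (carrier A) B (carrier B) f g = carrier (pb_group A B f g)"
  by (auto simp: pb_cone_def)

lemma pb_cone_map_prod:
  assumes PA: "PA \<subseteq> carrier A" and PB: "PB \<subseteq> carrier B"
    and \<alpha>: "\<alpha> ` carrier A \<subseteq> carrier A'" and \<beta>: "\<beta> ` carrier B \<subseteq> carrier B'"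
    and match: "\<And>a b. a \<in> carrier A \<Longrightarrow> b \<in> carrier B \<Longrightarrow> f' (\<alpha> a) = g' (\<beta> b) \<longleftrightarrow> f a = g b"
  shows "pb_cone A' (\<alpha> ` PA) B' (\<beta> ` PB) f' g' = map_prod \<alpha> \<beta> ` pb_cone A PA B PB f g"
proof (intro equalityI subsetI)
  fix z assume "z \<in> pb_cone A' (\<alpha> ` PA) B' (\<beta> ` PB) f' g'"
  then obtain a b where ab: "a \<in> PA" "b \<in> PB" "z = (\<alpha> a, \<beta> b)" "f' (\<alpha> a) = g' (\<beta> b)"
    by (auto simp: pb_cone_def)
  with PA PB match have "(a, b) \<in> pb_cone A PA B PB f g"
    by (auto simp: pb_cone_def)
  with ab(3) show "z \<in> map_prod \<alpha> \<beta> ` pb_cone A PA B PB f g"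
    by (metis map_prod_simp rev_image_eqI)
next
  fix z assume "z \<in> map_prod \<alpha> \<beta> ` pb_cone A PA B PB f g"
  then obtain a b where ab: "a \<in> PA" "b \<in> PB" "f a = g b" "z = (\<alpha> a, \<beta> b)"
    by (auto simp: pb_cone_def)
  with PA PB match have "f' (\<alpha> a) = g' (\<beta> b)" by blast
  moreover have "\<alpha> a \<in> carrier A'" "\<beta> b \<in> carrier B'" using ab PA PB \<alpha> \<beta> by blast+
  ultimately show "z \<in> pb_cone A' (\<alpha> ` PA) B' (\<beta> ` PB) f' g'"
    using ab by (auto simp: pb_cone_def)
qed

lemma carrier_pb_group_map_prod:
  assumes "\<alpha> ` carrier A = carrier A'" "\<beta> ` carrier B = carrier B'"
    and "\<And>a b. a \<in> carrier A \<Longrightarrow> b \<in> carrier B \<Longrightarrow> f' (\<alpha> a) = g' (\<beta> b) \<longleftrightarrow> f a = g b"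
  shows "carrier (pb_group A' B' f' g') = map_prod \<alpha> \<beta> ` carrier (pb_group A B f g)"
  using pb_cone_map_prod[of "carrier A" A "carrier B" B \<alpha> A' \<beta> B' f' g' f g] assms
  by (simp add: pb_cone_carrier)

lemma group_hom_fst_pb_group:
  assumes "group_hom A C f" "group_hom B C g"
  shows "group_hom (pb_group A B f g) A fst"
  using group_pb_group[OF assms] hom_fst_pb_group group_hom.axioms(1)[OF assms(1)]
  by (simp add: group_hom_def group_hom_axioms_def)

lemma group_hom_snd_pb_group:
  assumes "group_hom A C f" "group_hom B C g"
  shows "group_hom (pb_group A B f g) B snd"
  using group_pb_group[OF assms] hom_snd_pb_group group_hom.axioms(1)[OF assms(2)]
  by (simp add: group_hom_def group_hom_axioms_def)

lemma derived_pb_group: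
  assumes f: "group_hom A C f" and g: "group_hom B C g" and B: "comm_group B"
    and surj: "f ` carrier A \<subseteq> g ` carrier B"
  shows "derived (pb_group A B f g) (carrier (pb_group A B f g))
           = derived A (carrier A) \<times> {\<one>\<^bsub>B\<^esub>}" (is "derived ?D (carrier ?D) = _")
proof -
  interpret p: group_hom ?D A fst using group_hom_fst_pb_group[OF f g] .
  interpret q: group_hom ?D B snd using group_hom_snd_pb_group[OF f g] .
  interpret B: comm_group B by (fact B)
  have "fst ` derived ?D (carrier ?D) = derived A (fst ` carrier ?D)"
    by (rule p.derived_img[OF subset_refl, symmetric])
  then have fst_derived: "fst ` derived ?D (carrier ?D) = derived A (carrier A)"
    unfolding fst_image_pb_group[OF surj] .
  have "snd ` derived ?D (carrier ?D) = derived B (snd ` carrier ?D)"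
    by (rule q.derived_img[OF subset_refl, symmetric])
  also have "\<dots> = {\<one>\<^bsub>B\<^esub>}"
    using q.hom_closed by (intro B.derived_eq_singleton) blast
  finally have snd_derived: "snd ` derived ?D (carrier ?D) = {\<one>\<^bsub>B\<^esub>}" .
  show ?thesis
  proof (intro equalityI subsetI)
    fix x assume x: "x \<in> derived ?D (carrier ?D)"
    have "fst x \<in> derived A (carrier A)" using imageI[OF x, of fst] unfolding fst_derived .
    moreover have "snd x \<in> {\<one>\<^bsub>B\<^esub>}" using imageI[OF x, of snd] unfolding snd_derived .
    ultimately show "x \<in> derived A (carrier A) \<times> {\<one>\<^bsub>B\<^esub>}" by (simp add: mem_Times_iff)
  next
    fix x assume x: "x \<in> derived A (carrier A) \<times> {\<one>\<^bsub>B\<^esub>}"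
    then have "fst x \<in> fst ` derived ?D (carrier ?D)"
      unfolding fst_derived by (simp add: mem_Times_iff)
    then obtain c where c: "c \<in> derived ?D (carrier ?D)" "fst x = fst c" by (rule imageE)
    have "snd c \<in> {\<one>\<^bsub>B\<^esub>}" using imageI[OF c(1), of snd] unfolding snd_derived .
    with x c(2) have "x = c" by (simp add: mem_Times_iff prod_eq_iff)
    with c(1) show "x \<in> derived ?D (carrier ?D)" by (simp only:)
  qed
qed

lemma group_hom_eta: "group G \<Longrightarrow> group_hom G (abel G) (eta G)"
  unfolding group_hom_def group_hom_axioms_def eta_def[abs_def] abel_def
  by (simp add: normal.factorgroup_is_group normal.r_coset_hom_Mod group.derived_self_is_normal)

lemma comm_group_abel: "group G \<Longrightarrow> comm_group (abel G)"
  unfolding abel_def by (rule group.derived_quot_is_comm_group)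

lemma carrier_abel: "carrier (abel G) = eta G ` carrier G"
  by (auto simp: abel_def eta_def FactGroup_def RCOSETS_def)

lemma eta_comm_group:
  assumes "comm_group G" "x \<in> carrier G"
  shows "eta G x = {x}"
proof -
  interpret comm_group G by fact
  show ?thesis using assms(2) by (simp add: eta_def r_coset_def derived_eq_singleton)
qed

lemma inj_on_eta_comm_group: "comm_group G \<Longrightarrow> inj_on (eta G) (carrier G)"
  by (simp add: inj_on_def eta_comm_group)

lemma eta_mult_derived:
  assumes "group G" "k \<in> derived G (carrier G)" "x \<in> carrier G"
  shows "eta G (k \<otimes>\<^bsub>G\<^esub> x) = eta G x"
proof -
  interpret group G by fact
  have sub: "subgroup (derived G (carrier G)) G" by (simp add: derived_is_subgroup)
  then have "k \<in> carrier G" using assms(2) by (rule subgroup.mem_carrier)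
  then show ?thesis
    using assms(2,3) sub
    by (simp add: eta_def coset_mult_assoc[symmetric] subgroup.subset coset_join2)
qed

lemma eta_eq_imp_derived:
  assumes "group G" "x \<in> carrier G" "eta G x = eta G y"
  shows "\<exists>k\<in>derived G (carrier G). x = k \<otimes>\<^bsub>G\<^esub> y"
  using group.rcos_self[OF assms(1,2) group.derived_is_subgroup[OF assms(1)]] assms(3)
  by (auto simp: eta_def r_coset_def)

lemma abel_map_eta:
  assumes h: "group_hom G H h" and m: "m \<in> carrier G"
  shows "abel_map G H h (eta G m) = eta H (h m)"
proof -
  interpret h: group_hom G H h by (fact h)
  define x where "x = (SOME x. x \<in> eta G m)"
  have "x \<in> eta G m"
    unfolding x_def
    by (rule someI[of _ m]) (simp add: eta_def m h.G.rcos_self h.G.derived_is_subgroup)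
  then obtain k where k: "k \<in> derived G (carrier G)" "x = k \<otimes>\<^bsub>G\<^esub> m"
    unfolding eta_def r_coset_def by auto
  have "h k \<in> h ` derived G (carrier G)" using k(1) by blast
  also have "\<dots> = derived H (h ` carrier G)" by (simp add: h.derived_img)
  also have "\<dots> \<subseteq> derived H (carrier H)" by (rule h.H.mono_derived) auto
  finally have hk: "h k \<in> derived H (carrier H)" .
  have "k \<in> carrier G" using k(1) h.G.derived_in_carrier by blast
  then have "abel_map G H h (eta G m) = eta H (h k \<otimes>\<^bsub>H\<^esub> h m)"
    using k(2) m by (simp add: abel_map_def x_def[symmetric])
  also have "\<dots> = eta H (h m)" using eta_mult_derived[OF h.H.is_group hk] m by simp
  finally show ?thesis .
qed

lemma hom_abel_map:
  assumes h: "group_hom G H h"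
  shows "abel_map G H h \<in> hom (abel G) (abel H)"
proof -
  interpret h: group_hom G H h by (fact h)
  interpret eG: group_hom G "abel G" "eta G" by (rule group_hom_eta) (fact h.G.is_group)
  interpret eH: group_hom H "abel H" "eta H" by (rule group_hom_eta) (fact h.H.is_group)
  show ?thesis
  proof (rule homI)
    fix M assume "M \<in> carrier (abel G)"
    then obtain m where "m \<in> carrier G" "M = eta G m" by (auto simp: carrier_abel)
    then show "abel_map G H h M \<in> carrier (abel H)" by (simp add: abel_map_eta[OF h])
  next
    fix M N assume "M \<in> carrier (abel G)" "N \<in> carrier (abel G)"
    then obtain m n where mn: "m \<in> carrier G" "n \<in> carrier G" "M = eta G m" "N = eta G n"
      by (auto simp: carrier_abel)
    then have "abel_map G H h (M \<otimes>\<^bsub>abel G\<^esub> N) = eta H (h (m \<otimes>\<^bsub>G\<^esub> n))"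
      using abel_map_eta[OF h] by (metis eG.hom_mult h.G.m_closed)
    also have "\<dots> = abel_map G H h M \<otimes>\<^bsub>abel H\<^esub> abel_map G H h N"
      using mn by (simp add: abel_map_eta[OF h])
    finally show "abel_map G H h (M \<otimes>\<^bsub>abel G\<^esub> N)
      = abel_map G H h M \<otimes>\<^bsub>abel H\<^esub> abel_map G H h N" .
  qed
qed

lemma inj_on_abel_pb_group:
  assumes f: "group_hom A C f" and g: "group_hom B C g" and B: "comm_group B"
    and surj: "f ` carrier A \<subseteq> g ` carrier B"
  defines "D \<equiv> pb_group A B f g"
  shows "inj_on (\<lambda>M. (abel_map D A fst M, abel_map D B snd M)) (carrier (abel D))"
proof (rule inj_onI)
  interpret f: group_hom A C f by (fact f)
  interpret B: comm_group B by (fact B)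
  have D: "group D" unfolding D_def using group_pb_group[OF f g] .
  have p: "group_hom D A fst" and q: "group_hom D B snd"
    unfolding D_def using group_hom_fst_pb_group[OF f g] group_hom_snd_pb_group[OF f g] .
  fix M N assume "M \<in> carrier (abel D)" "N \<in> carrier (abel D)"
    and eq: "(abel_map D A fst M, abel_map D B snd M) = (abel_map D A fst N, abel_map D B snd N)"
  then obtain d e where de: "d \<in> carrier D" "e \<in> carrier D" "M = eta D d" "N = eta D e"
    by (auto simp: carrier_abel)
  have fst_de: "fst d \<in> carrier A" "fst e \<in> carrier A"
    and snd_de: "snd d \<in> carrier B" "snd e \<in> carrier B"
    using de(1,2) group_hom.hom_closed[OF p] group_hom.hom_closed[OF q] by blast+
  have "eta A (fst d) = eta A (fst e)" and "eta B (snd d) = eta B (snd e)"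
    using eq de by (simp_all add: abel_map_eta[OF p] abel_map_eta[OF q])
  then obtain k where k: "k \<in> derived A (carrier A)" "fst d = k \<otimes>\<^bsub>A\<^esub> fst e"
    and snd_eq: "snd d = snd e"
    using eta_eq_imp_derived[OF f.G.is_group fst_de(1)] inj_on_eta_comm_group[OF B] snd_de
    by (metis inj_onD)
  have "(k, \<one>\<^bsub>B\<^esub>) \<in> derived D (carrier D)"
    using derived_pb_group[OF f g B surj] k(1) unfolding D_def by simp
  moreover have "d = (k, \<one>\<^bsub>B\<^esub>) \<otimes>\<^bsub>D\<^esub> e"
    using k(2) snd_eq snd_de(2) unfolding D_def by (simp add: prod_eq_iff)
  ultimately show "M = N" using eta_mult_derived[OF D _ de(2)] de(3,4) by simp
qed

theorem corollary2p6:
  fixes B :: "('b, 'm) monoid_scheme" and PB :: "'b set"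
    and Y :: "('x, 'n) monoid_scheme" and PY :: "'x set"
    and \<phi> :: "'x \<Rightarrow> 'b set"
  assumes "preord_group B PB"
    and "preord_ab Y PY"
    and "preord_regepi Y PY (abel B) (abel_cone B PB) \<phi>"
  shows "is_pullback_square
           (abel (pb_group B Y (eta B) \<phi>)) (abel_cone (pb_group B Y (eta B) \<phi>) (pb_cone B PB Y PY (eta B) \<phi>))
           (abel B) (abel_cone B PB)
           (abel Y) (abel_cone Y PY)
           (abel (abel B))
           (abel_map (pb_group B Y (eta B) \<phi>) B fst)
           (abel_map (pb_group B Y (eta B) \<phi>) Y snd)
           (abel_map B (abel B) (eta B))
           (abel_map Y (abel B) \<phi>)"
proof -
  let ?D = "pb_group B Y (eta B) \<phi>" and ?PD = "pb_cone B PB Y PY (eta B) \<phi>"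
  let ?f = "abel_map B (abel B) (eta B)" and ?g = "abel_map Y (abel B) \<phi>"
  let ?\<Phi> = "\<lambda>M. (abel_map ?D B fst M, abel_map ?D Y snd M)"
  have B: "group B" and PB: "PB \<subseteq> carrier B" and Y: "comm_group Y" and PY: "PY \<subseteq> carrier Y"
    using assms(1,2) by (auto simp: preord_ab_def preord_group_def)
  have \<eta>: "group_hom B (abel B) (eta B)" using B by (rule group_hom_eta)
  have \<phi>: "group_hom Y (abel B) \<phi>" and surj: "\<phi> ` carrier Y = carrier (abel B)"
    using assms(3) \<eta> Y
    by (auto simp: preord_regepi_def preord_hom_def group_hom_def group_hom_axioms_def comm_group_def)
  have p: "group_hom ?D B fst" and q: "group_hom ?D Y snd"
    using group_hom_fst_pb_group[OF \<eta> \<phi>] group_hom_snd_pb_group[OF \<eta> \<phi>] .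
  have \<Phi>_eta: "?\<Phi> ` eta ?D ` S = map_prod (eta B) (eta Y) ` S" if "S \<subseteq> carrier ?D" for S
    using that p q by (force simp: image_image abel_map_eta intro!: image_cong)
  have match: "?f (eta B b) = ?g (eta Y y) \<longleftrightarrow> eta B b = \<phi> y"
    if "b \<in> carrier B" "y \<in> carrier Y" for b y
    using that \<eta> \<phi> inj_on_eta_comm_group[OF comm_group_abel[OF B]]
    by (simp add: abel_map_eta group_hom.hom_closed inj_on_eq_iff)
  have carrier: "?\<Phi> ` carrier (abel ?D) = carrier (pb_group (abel B) (abel Y) ?f ?g)"
    using \<Phi>_eta[OF subset_refl] surj
      carrier_pb_group_map_prod[of "eta B" B "abel B" "eta Y" Y "abel Y" ?f ?g "eta B" \<phi>, OF _ _ match]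
    by (simp add: carrier_abel)
  then have hom: "?\<Phi> \<in> hom (abel ?D) (pb_group (abel B) (abel Y) ?f ?g)"
    by (intro hom_pair_pb_group hom_abel_map p q) auto
  have cone:
    "?\<Phi> ` abel_cone ?D ?PD = pb_cone (abel B) (abel_cone B PB) (abel Y) (abel_cone Y PY) ?f ?g"
    using \<Phi>_eta[of ?PD] pb_cone_map_prod[of PB B PY Y "eta B" "abel B" "eta Y" "abel Y" ?f ?g
        "eta B" \<phi>, OF PB PY _ _ match]
    by (auto simp: abel_cone_def pb_cone_def carrier_abel)
  have "inj_on ?\<Phi> (carrier (abel ?D))"
    using inj_on_abel_pb_group[OF \<eta> \<phi> Y] surj by (simp add: carrier_abel)
  with carrier hom cone show ?thesis
    unfolding is_pullback_square_def bij_betw_def by auto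
qed

end
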